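(* For $n\ge1$ and $0\le k\le n-1$, let $a_{n,k}$ be the number of $\pi\in\mathfrak{A}_{2n}(231)$ with $\pi(2n)=n+k+1$. Then $$a_{n,k}=\frac{n-k}{n}\binom{n-1+k}{k}.$$
   Context: $\mathfrak{A}_{2n}(231)$ is the set of permutations $\pi$ of $[2n]$ that are alternating (up-down), i.e. $\pi(1)<\pi(2)>\pi(3)<\cdots>\pi(2n-1)<\pi(2n)$, and avoid the classical pattern $231$. *)

theory Defs
  imports Complex_Main "HOL-Combinatorics.Permutations"
begin

definition alternating :: "nat \<Rightarrow> (nat \<Rightarrow> nat) \<Rightarrow> bool" where
  "alternating m p \<longleftrightarrow>
     (\<forall>i. 1 \<le> i \<and> i < m \<longrightarrow>
        (if odd i then p i < p (Suc i) else p i > p (Suc i)))"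

definition avoids231 :: "nat \<Rightarrow> (nat \<Rightarrow> nat) \<Rightarrow> bool" where
  "avoids231 m p \<longleftrightarrow>
     \<not> (\<exists>i j k. 1 \<le> i \<and> i < j \<and> j < k \<and> k \<le> m \<and> p k < p i \<and> p i < p j)"

definition alt231 :: "nat \<Rightarrow> (nat \<Rightarrow> nat) set" where
  "alt231 n = {p. p permutes {1..2*n} \<and> alternating (2*n) p \<and> avoids231 (2*n) p}"

definition a_nk :: "nat \<Rightarrow> nat \<Rightarrow> nat" where
  "a_nk n k = card {p \<in> alt231 n. p (2*n) = n + k + 1}"

end

theory Submission
  imports Defs
begin

text \<open>Let \<open>E(n, v)\<close> count the 231-avoiding alternating permutations of \<open>[2n]\<close> ending in \<open>v\<close>.
  If the penultimate entry of such a permutation is not \<open>v-1\<close>, exchanging the values \<open>v-1\<close> and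
  \<open>v\<close> gives one ending in \<open>v-1\<close>, and every permutation ending in \<open>v-1\<close> arises this way. If the
  penultimate entry is \<open>v-1\<close>, the entry before it must be \<open>v+1\<close> (anything else creates a 231
  pattern), and deleting the last two entries and closing the gap gives a permutation counted by
  \<open>E(n-1, v-1)\<close>. Thus \<open>E(n, v) = E(n, v-1) + E(n-1, v-1)\<close>, the recursion of the ballot numbers
  \<open>C(v-2, v-n-1) - C(v-2, v-n-2)\<close>; the boundary values \<open>E(n, 1) = E(n, 2n+1) = 0\<close> and
  \<open>E(1, 2) = 1\<close> match as well, and \<open>v = n+k+1\<close> gives the formula.\<close>

lemma alternating_order_cong:
  assumes "\<And>i j. i \<in> {1..m} \<Longrightarrow> j \<in> {1..m} \<Longrightarrow> q i < q j \<longleftrightarrow> p i < p j"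
  shows "alternating m q \<longleftrightarrow> alternating m p"
  using assms[of _ "Suc _"] assms[of "Suc _"] unfolding alternating_def
  by (metis Suc_leI atLeastAtMost_iff le_SucI less_imp_le_nat)

lemma avoids231_order_cong:
  assumes "\<And>i j. i \<in> {1..m} \<Longrightarrow> j \<in> {1..m} \<Longrightarrow> q i < q j \<longleftrightarrow> p i < p j"
  shows "avoids231 m q \<longleftrightarrow> avoids231 m p"
proof -
  have "q k < q i \<and> q i < q j \<longleftrightarrow> p k < p i \<and> p i < p j"
    if "1 \<le> i" "i < j" "j < k" "k \<le> m" for i j k
    using that assms[of k i] assms[of i j] by auto
  then show ?thesis
    unfolding avoids231_def by (meson order.strict_trans)
qed

lemma alternating_prefix: "alternating m p \<Longrightarrow> m' \<le> m \<Longrightarrow> alternating m' p"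
  unfolding alternating_def by auto

lemma avoids231_prefix: "avoids231 m p \<Longrightarrow> m' \<le> m \<Longrightarrow> avoids231 m' p"
  unfolding avoids231_def by auto

lemma alternating_ascent: "alternating m p \<Longrightarrow> odd i \<Longrightarrow> i < m \<Longrightarrow> p i < p (Suc i)"
  unfolding alternating_def by (auto elim: oddE)

lemma alternating_descent:
  "alternating m p \<Longrightarrow> even i \<Longrightarrow> 1 \<le> i \<Longrightarrow> i < m \<Longrightarrow> p (Suc i) < p i"
  unfolding alternating_def by auto

lemma transpose_Suc_less_iff:
  fixes a x y :: nat
  assumes "{x, y} \<noteq> {a, Suc a}"
  shows "Transposition.transpose a (Suc a) x < Transposition.transpose a (Suc a) y \<longleftrightarrow> x < y"
  using assms by (auto simp: Transposition.transpose_def doubleton_eq_iff)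

lemma alternating_transpose_Suc:
  assumes "alternating m p" and "\<And>i. 1 \<le> i \<Longrightarrow> i < m \<Longrightarrow> {p i, p (Suc i)} \<noteq> {a, Suc a}"
  shows "alternating m (Transposition.transpose a (Suc a) \<circ> p)"
  using assms transpose_Suc_less_iff[of "p _" "p (Suc _)" a] transpose_Suc_less_iff[of "p (Suc _)" "p _" a]
  unfolding alternating_def by (simp add: insert_commute)

lemma avoids231_transpose_Suc_cases [consumes 2]:
  fixes a :: nat
  assumes "avoids231 m p" and "\<not> avoids231 m (Transposition.transpose a (Suc a) \<circ> p)"
  obtains i j k where "1 \<le> i" "i < j" "j < k" "k \<le> m" "p i = a" "p k = Suc a" "Suc a < p j"
    | i j k where "1 \<le> i" "i < j" "j < k" "k \<le> m" "p i = Suc a" "p j = a" "p k < a"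
proof -
  let ?\<tau> = "Transposition.transpose a (Suc a)"
  obtain i j k where ijk: "1 \<le> i" "i < j" "j < k" "k \<le> m"
    and lt: "?\<tau> (p k) < ?\<tau> (p i)" "?\<tau> (p i) < ?\<tau> (p j)"
    using assms(2) unfolding avoids231_def by auto
  have "\<not> (p k < p i \<and> p i < p j)"
    using assms(1) ijk unfolding avoids231_def by blast
  then consider "{p k, p i} = {a, Suc a}" | "{p i, p j} = {a, Suc a}"
    using lt transpose_Suc_less_iff by blast
  then show thesis
  proof cases
    case 1
    then have "p i = a" "p k = Suc a"
      using lt(1) by (auto simp: doubleton_eq_iff)
    moreover have "Suc a < p j"
      using lt(2) \<open>p i = a\<close> by (auto simp: Transposition.transpose_def split: if_splits)
    ultimately show thesis using that(1) ijk by blast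
  next
    case 2
    then have "p i = Suc a" "p j = a"
      using lt(2) by (auto simp: doubleton_eq_iff)
    moreover have "p k < a"
      using lt(1) \<open>p i = Suc a\<close> by (auto simp: Transposition.transpose_def split: if_splits)
    ultimately show thesis using that(2) ijk by blast
  qed
qed

lemma alt231_transpose_last_down:
  assumes p: "p \<in> alt231 (Suc n)" and last: "p (2*n+2) = Suc a" and "p (2*n+1) \<noteq> a"
  shows "Transposition.transpose a (Suc a) \<circ> p \<in> alt231 (Suc n)"
proof -
  have perm: "p permutes {1..2*n+2}" and alt: "alternating (2*n+2) p"
    and av: "avoids231 (2*n+2) p"
    using p by (simp_all add: alt231_def)
  have at_last: "i = 2*n+2" if "p i = Suc a" for i
    using permutes_inj[OF perm] last that by (metis injD)
  have "p (2*n+1) < Suc a"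
    using alternating_ascent[OF alt, of "2*n+1"] last by simp
  with \<open>p (2*n+1) \<noteq> a\<close> have before_last: "p (2*n+1) < a" by simp
  moreover have "p (2*n+1) \<in> {1..2*n+2}" and "Suc a \<in> {1..2*n+2}"
    using permutes_in_image[OF perm, of "2*n+1"] permutes_in_image[OF perm, of "2*n+2"] last
    by auto
  ultimately have "Transposition.transpose a (Suc a) \<circ> p permutes {1..2*n+2}"
    by (intro permutes_compose[OF perm] permutes_swap_id) auto
  moreover have "alternating (2*n+2) (Transposition.transpose a (Suc a) \<circ> p)"
  proof (rule alternating_transpose_Suc[OF alt])
    show "{p i, p (Suc i)} \<noteq> {a, Suc a}" if "1 \<le> i" "i < 2*n+2" for i
      using that at_last[of i] at_last[of "Suc i"] before_last by (auto simp: doubleton_eq_iff)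
  qed
  moreover have "avoids231 (2*n+2) (Transposition.transpose a (Suc a) \<circ> p)"
  proof (rule ccontr)
    assume "\<not> ?thesis"
    with av show False
    proof (cases rule: avoids231_transpose_Suc_cases)
      case (1 i j k)
      text \<open>The value \<open>p (2*n+1)\<close> then completes a 231 pattern of \<open>p\<close> with \<open>i\<close> and \<open>j\<close>.\<close>
      then have "j < 2*n+1"
        using at_last[of k] before_last by (cases "j = 2*n+1") auto
      then have "1 \<le> i \<and> i < j \<and> j < 2*n+1 \<and> 2*n+1 \<le> 2*n+2 \<and> p (2*n+1) < p i \<and> p i < p j"
        using 1 before_last by simp
      then show False
        using av unfolding avoids231_def by blast
    next
      case (2 i j k)
      then show False using at_last[of i] by simp
    qed
  qed
  ultimately show ?thesis by (simp add: alt231_def)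
qed

lemma alt231_transpose_last_up:
  assumes q: "q \<in> alt231 (Suc n)" and last: "q (2*n+2) = a" and "a \<le> 2*n+1"
  shows "Transposition.transpose a (Suc a) \<circ> q \<in> alt231 (Suc n)"
proof -
  have perm: "q permutes {1..2*n+2}" and alt: "alternating (2*n+2) q"
    and av: "avoids231 (2*n+2) q"
    using q by (simp_all add: alt231_def)
  have at_last: "i = 2*n+2" if "q i = a" for i
    using permutes_inj[OF perm] last that by (metis injD)
  have before_last: "q (2*n+1) < a"
    using alternating_ascent[OF alt, of "2*n+1"] last by simp
  have "a \<in> {1..2*n+2}" "Suc a \<in> {1..2*n+2}"
    using permutes_in_image[OF perm, of "2*n+2"] last \<open>a \<le> 2*n+1\<close> by auto
  then have "Transposition.transpose a (Suc a) \<circ> q permutes {1..2*n+2}"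
    by (intro permutes_compose[OF perm] permutes_swap_id)
  moreover have "alternating (2*n+2) (Transposition.transpose a (Suc a) \<circ> q)"
  proof (rule alternating_transpose_Suc[OF alt])
    show "{q i, q (Suc i)} \<noteq> {a, Suc a}" if "1 \<le> i" "i < 2*n+2" for i
      using that at_last[of i] at_last[of "Suc i"] before_last by (auto simp: doubleton_eq_iff)
  qed
  moreover have "avoids231 (2*n+2) (Transposition.transpose a (Suc a) \<circ> q)"
  proof (rule ccontr)
    assume "\<not> ?thesis"
    with av show False
    proof (cases rule: avoids231_transpose_Suc_cases)
      case (1 i j k)
      then show False using at_last[of i] by simp
    next
      case (2 i j k)
      then show False using at_last[of j] by simp
    qed
  qed
  ultimately show ?thesis by (simp add: alt231_def)
qed

definition alt231_ending :: "nat \<Rightarrow> nat \<Rightarrow> (nat \<Rightarrow> nat) set" where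
  "alt231_ending n v = {p \<in> alt231 n. p (2*n) = v}"

definition remove_last_pair :: "nat \<Rightarrow> nat \<Rightarrow> (nat \<Rightarrow> nat) \<Rightarrow> nat \<Rightarrow> nat" where
  "remove_last_pair a m p i = (if i \<in> {1..m} then if Suc a < p i then p i - 2 else p i else i)"

definition append_pair :: "nat \<Rightarrow> nat \<Rightarrow> (nat \<Rightarrow> nat) \<Rightarrow> nat \<Rightarrow> nat" where
  "append_pair a m s i =
     (if i \<in> {1..m} then if a \<le> s i then s i + 2 else s i
      else if i = m+1 then a else if i = m+2 then Suc a else i)"

lemma remove_last_pair_append_pair:
  assumes "\<And>i. i \<notin> {1..m} \<Longrightarrow> s i = i"
  shows "remove_last_pair a m (append_pair a m s) = s"
  using assms by (auto simp: fun_eq_iff remove_last_pair_def append_pair_def)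

lemma append_pair_remove_last_pair:
  assumes p: "p permutes {1..m+2}" and "p (m+1) = a" "p (m+2) = Suc a"
  shows "append_pair a m (remove_last_pair a m p) = p"
proof
  fix i
  have "p i \<noteq> a" "p i \<noteq> Suc a" if "i \<in> {1..m}"
    using that assms(2,3)[symmetric] by (auto simp: inj_eq[OF permutes_inj[OF p]])
  then show "append_pair a m (remove_last_pair a m p) i = p i"
    using assms permutes_not_in[OF p, of i]
    by (auto simp: remove_last_pair_def append_pair_def)
qed

lemma remove_last_pair_in_alt231_ending:
  assumes p: "p \<in> alt231 (Suc n)" and "1 \<le> n" and last: "p (2*n+1) = a" "p (2*n+2) = Suc a"
  shows "remove_last_pair a (2*n) p \<in> alt231_ending n a"
proof -
  define m where "m = 2*n"
  define f where "f = remove_last_pair a m p"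
  have perm: "p permutes {1..m+2}" and alt: "alternating (m+2) p" and av: "avoids231 (m+2) p"
    using p by (simp_all add: alt231_def m_def)
  have last': "p (m+1) = a" "p (m+2) = Suc a"
    using last by (simp_all add: m_def)
  have range: "p i \<in> {1..m+2} - {a, Suc a}" if "i \<in> {1..m}" for i
    using that last'[symmetric] permutes_in_image[OF perm, of i]
    by (auto simp: inj_eq[OF permutes_inj[OF perm]])
  have f_eq: "f i = (if Suc a < p i then p i - 2 else p i)" if "i \<in> {1..m}" for i
    using that by (simp add: f_def remove_last_pair_def)
  have order: "f i < f j \<longleftrightarrow> p i < p j" if "i \<in> {1..m}" "j \<in> {1..m}" for i j
    using range[OF that(1)] range[OF that(2)] f_eq[OF that(1)] f_eq[OF that(2)] by auto
  have "1 \<le> a" "Suc a \<le> m+2"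
    using permutes_in_image[OF perm, of "m+1"] permutes_in_image[OF perm, of "m+2"] last'
    by simp_all
  have "f permutes {1..m}"
  proof (rule inj_imp_permutes)
    show "inj_on f {1..m}"
      using order by (intro inj_onI) (metis inj_eq[OF permutes_inj[OF perm]] not_less_iff_gr_or_eq)
    show "f i \<in> {1..m}" if "i \<in> {1..m}" for i
      using range[OF that] f_eq[OF that] \<open>1 \<le> a\<close> \<open>Suc a \<le> m+2\<close> by auto
    show "f i = i" if "i \<notin> {1..m}" for i
      using that by (auto simp: f_def remove_last_pair_def)
  qed simp
  moreover have "alternating m f"
    using alternating_order_cong[of m f p] order alternating_prefix[OF alt] by simp
  moreover have "avoids231 m f"
    using avoids231_order_cong[of m f p] order avoids231_prefix[OF av] by simp
  moreover have "p m = a + 2"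
  proof -
    have "a < p m"
      using alternating_descent[OF alt, of m] \<open>1 \<le> n\<close> last' by (simp add: m_def)
    moreover have "m \<in> {1..m}" using \<open>1 \<le> n\<close> by (simp add: m_def)
    ultimately have big: "a + 2 \<le> p m" "p m \<le> m+2"
      using range[of m] by auto
    then have "a + 2 \<in> p ` {1..m+2}"
      using permutes_image[OF perm] by simp
    then obtain i where i: "i \<in> {1..m+2}" "p i = a + 2"
      by (metis imageE)
    text \<open>Otherwise \<open>a+2\<close> sits left of position \<open>m\<close> and forms a 231 pattern with
      \<open>p m\<close> and \<open>p (m+1) = a\<close>.\<close>
    have "\<not> i < m"
    proof
      assume "i < m"
      then have "p i \<noteq> p m"
        by (simp add: inj_eq[OF permutes_inj[OF perm]])
      with \<open>i < m\<close> i big last'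
      have "1 \<le> i \<and> i < m \<and> m < m+1 \<and> m+1 \<le> m+2 \<and> p (m+1) < p i \<and> p i < p m"
        by auto
      then show False
        using av unfolding avoids231_def by blast
    qed
    moreover have "i \<noteq> m+1" "i \<noteq> m+2"
      using i last' by auto
    ultimately have "i = m"
      using i(1) by auto
    then show ?thesis
      using i by simp
  qed
  then have "f m = a"
    using f_eq[of m] \<open>1 \<le> n\<close> by (simp add: m_def)
  ultimately show ?thesis
    by (simp add: alt231_ending_def alt231_def f_def m_def)
qed

lemma append_pair_in_alt231:
  assumes s: "s \<in> alt231_ending n a" and "1 \<le> n"
  shows "append_pair a (2*n) s \<in> alt231 (Suc n)"
proof -
  define m where "m = 2*n"
  define g where "g = append_pair a m s"
  have perm: "s permutes {1..m}" and alt: "alternating m s" and av: "avoids231 m s"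
    and last: "s m = a"
    using s by (simp_all add: alt231_ending_def alt231_def m_def)
  have "m \<in> {1..m}"
    using \<open>1 \<le> n\<close> by (simp add: m_def)
  then have "a \<in> {1..m}"
    using permutes_in_image[OF perm, of m] last by simp
  have range: "s i \<in> {1..m}" if "i \<in> {1..m}" for i
    using that permutes_in_image[OF perm, of i] by simp
  have g_eq: "g i = (if a \<le> s i then s i + 2 else s i)" if "i \<in> {1..m}" for i
    using that by (simp add: g_def append_pair_def)
  have g_last: "g (m+1) = a" "g (m+2) = Suc a"
    by (simp_all add: g_def append_pair_def)
  have order: "g i < g j \<longleftrightarrow> s i < s j" if "i \<in> {1..m}" "j \<in> {1..m}" for i j
    using g_eq[OF that(1)] g_eq[OF that(2)] by auto
  have "g permutes {1..m+2}"
  proof (rule inj_imp_permutes)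
    have gap: "g i \<noteq> a" "g i \<noteq> Suc a" if "i \<in> {1..m}" for i
      using g_eq[OF that] by auto
    show "inj_on g {1..m+2}"
    proof (rule inj_onI)
      fix i j assume ij: "i \<in> {1..m+2}" "j \<in> {1..m+2}" "g i = g j"
      show "i = j"
      proof (cases "i \<in> {1..m} \<and> j \<in> {1..m}")
        case True
        then have "s i = s j"
          using order[of i j] order[of j i] ij(3) by (metis not_less_iff_gr_or_eq)
        then show ?thesis
          by (simp add: inj_eq[OF permutes_inj[OF perm]])
      next
        case False
        have "i \<in> {1..m} \<or> i = m+1 \<or> i = m+2" "j \<in> {1..m} \<or> j = m+1 \<or> j = m+2"
          using ij(1,2) by auto
        then show ?thesis
          using False ij(3) gap[of i] gap[of j] g_last by auto
      qed
    qed
    show "g i \<in> {1..m+2}" if "i \<in> {1..m+2}" for i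
    proof -
      have "i \<in> {1..m} \<or> i = m+1 \<or> i = m+2"
        using that by auto
      then show ?thesis
        using g_eq[of i] range[of i] g_last \<open>a \<in> {1..m}\<close> by auto
    qed
    show "g i = i" if "i \<notin> {1..m+2}" for i
      using that by (auto simp: g_def append_pair_def)
  qed simp
  moreover have "alternating (m+2) g"
    unfolding alternating_def
  proof (intro allI impI)
    fix i assume i: "1 \<le> i \<and> i < m+2"
    have "g m = a + 2"
      using g_eq[OF \<open>m \<in> {1..m}\<close>] last by simp
    moreover have "alternating m g"
      using alternating_order_cong[of m g s] order alt by simp
    moreover have "even m" "odd (m+1)"
      by (simp_all add: m_def)
    ultimately show "if odd i then g i < g (Suc i) else g (Suc i) < g i"
      using i g_last unfolding alternating_def
      by (cases "i < m") (auto simp: less_Suc_eq)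
  qed
  moreover have "avoids231 (m+2) g"
    unfolding avoids231_def
  proof
    assume "\<exists>i j k. 1 \<le> i \<and> i < j \<and> j < k \<and> k \<le> m+2 \<and> g k < g i \<and> g i < g j"
    then obtain i j k where ijk: "1 \<le> i" "i < j" "j < k" "k \<le> m+2"
      and lt: "g k < g i" "g i < g j"
      by blast
    have "avoids231 m g"
      using avoids231_order_cong[of m g s] order av by simp
    have "m < k"
    proof (rule ccontr)
      assume "\<not> m < k"
      then have "1 \<le> i \<and> i < j \<and> j < k \<and> k \<le> m \<and> g k < g i \<and> g i < g j"
        using ijk lt by simp
      with \<open>avoids231 m g\<close> show False
        unfolding avoids231_def by blast
    qed
    then have k: "k = m+1 \<or> k = m+2"
      using ijk by auto
    then have "a \<le> g k"
      using g_last by auto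
    show False
    proof (cases "j \<le> m")
      case False
      then have "j = m+1" "k = m+2"
        using ijk by auto
      then show False
        using lt g_last by simp
    next
      case True
      text \<open>The entries at \<open>i\<close> and \<open>j\<close> exceed \<open>a\<close>, so with \<open>s m = a\<close> they form
        a 231 pattern of \<open>s\<close>.\<close>
      have "i \<noteq> m" "i \<in> {1..m}" "j \<in> {1..m}"
        using True ijk by auto
      then have "a < s i"
        using g_eq[of i] lt \<open>a \<le> g k\<close> last inj_eq[OF permutes_inj[OF perm], of i m]
        by (auto split: if_splits)
      moreover have "s i < s j"
        using order[of i j] lt(2) \<open>i \<in> {1..m}\<close> \<open>j \<in> {1..m}\<close> by simp
      ultimately have "1 \<le> i \<and> i < j \<and> j < m \<and> m \<le> m \<and> s m < s i \<and> s i < s j"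
        using True ijk last by (cases "j = m") auto
      then show False
        using av unfolding avoids231_def by blast
    qed
  qed
  ultimately show ?thesis
    by (simp add: alt231_def g_def m_def)
qed

lemma finite_alt231: "finite (alt231 n)"
  by (rule finite_subset[OF _ finite_permutations[of "{1..2*n}"]]) (auto simp: alt231_def)

lemma bij_betw_transpose_alt231_ending:
  assumes "a \<le> 2*n+1"
  shows "bij_betw ((\<circ>) (Transposition.transpose a (Suc a)))
           {p \<in> alt231_ending (Suc n) (Suc a). p (2*n+1) \<noteq> a} (alt231_ending (Suc n) a)"
proof (rule bij_betw_byWitness[where f' = "(\<circ>) (Transposition.transpose a (Suc a))"])
  let ?\<tau> = "Transposition.transpose a (Suc a)"
  show "(\<circ>) ?\<tau> ` {p \<in> alt231_ending (Suc n) (Suc a). p (2*n+1) \<noteq> a} \<subseteq> alt231_ending (Suc n) a"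
    using alt231_transpose_last_down by (auto simp: alt231_ending_def)
  have "?\<tau> \<circ> q \<in> alt231_ending (Suc n) (Suc a) \<and> (?\<tau> \<circ> q) (2*n+1) \<noteq> a"
    if "q \<in> alt231_ending (Suc n) a" for q
  proof -
    have q: "q \<in> alt231 (Suc n)" "q (2*n+2) = a"
      using that by (simp_all add: alt231_ending_def)
    then have "q (2*n+1) < a"
      using alternating_ascent[of "2*n+2" q "2*n+1"] by (simp add: alt231_def)
    then show ?thesis
      using q alt231_transpose_last_up[OF q assms] by (simp add: alt231_ending_def)
  qed
  then show "(\<circ>) ?\<tau> ` alt231_ending (Suc n) a
      \<subseteq> {p \<in> alt231_ending (Suc n) (Suc a). p (2*n+1) \<noteq> a}"
    by (simp add: image_subset_iff)
qed (simp_all add: fun_eq_iff)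

lemma bij_betw_remove_last_pair:
  assumes "1 \<le> n"
  shows "bij_betw (remove_last_pair a (2*n))
           {p \<in> alt231_ending (Suc n) (Suc a). p (2*n+1) = a} (alt231_ending n a)"
proof (rule bij_betw_byWitness[where f' = "append_pair a (2*n)"])
  show "\<forall>p \<in> {p \<in> alt231_ending (Suc n) (Suc a). p (2*n+1) = a}.
          append_pair a (2*n) (remove_last_pair a (2*n) p) = p"
    by (auto intro!: append_pair_remove_last_pair simp: alt231_ending_def alt231_def)
  show "\<forall>s \<in> alt231_ending n a. remove_last_pair a (2*n) (append_pair a (2*n) s) = s"
    by (auto intro!: remove_last_pair_append_pair permutes_not_in
        simp: alt231_ending_def alt231_def)
  show "remove_last_pair a (2*n) ` {p \<in> alt231_ending (Suc n) (Suc a). p (2*n+1) = a}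
          \<subseteq> alt231_ending n a"
    using remove_last_pair_in_alt231_ending assms by (auto simp: alt231_ending_def)
  show "append_pair a (2*n) ` alt231_ending n a
          \<subseteq> {p \<in> alt231_ending (Suc n) (Suc a). p (2*n+1) = a}"
    using append_pair_in_alt231 assms by (auto simp: alt231_ending_def append_pair_def)
qed

lemma card_alt231_ending_Suc:
  assumes "1 \<le> n" and "a \<le> 2*n+1"
  shows "card (alt231_ending (Suc n) (Suc a))
           = card (alt231_ending (Suc n) a) + card (alt231_ending n a)"
proof -
  have "alt231_ending (Suc n) (Suc a)
          = {p \<in> alt231_ending (Suc n) (Suc a). p (2*n+1) \<noteq> a}
            \<union> {p \<in> alt231_ending (Suc n) (Suc a). p (2*n+1) = a}"
    by blast
  moreover have "finite (alt231_ending (Suc n) (Suc a))"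
    using finite_alt231 by (simp add: alt231_ending_def)
  ultimately have "card (alt231_ending (Suc n) (Suc a))
      = card {p \<in> alt231_ending (Suc n) (Suc a). p (2*n+1) \<noteq> a}
        + card {p \<in> alt231_ending (Suc n) (Suc a). p (2*n+1) = a}"
    by (metis (no_types, lifting) card_Un_disjoint disjoint_iff finite_Un mem_Collect_eq)
  then show ?thesis
    using bij_betw_same_card[OF bij_betw_transpose_alt231_ending[OF assms(2)]]
      bij_betw_same_card[OF bij_betw_remove_last_pair[OF assms(1)]]
    by simp
qed

lemma alt231_ending_1:
  assumes "1 \<le> n"
  shows "alt231_ending n 1 = {}"
proof (intro equals0I)
  fix p assume "p \<in> alt231_ending n 1"
  then have perm: "p permutes {1..2*n}" and alt: "alternating (2*n) p" and "p (2*n) = 1"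
    by (simp_all add: alt231_ending_def alt231_def)
  moreover have "p (2*n-1) < p (Suc (2*n-1))"
    using alternating_ascent[OF alt, of "2*n-1"] assms by simp
  moreover have "2*n-1 \<in> {1..2*n}"
    using assms by simp
  then have "1 \<le> p (2*n-1)"
    using permutes_in_image[OF perm, of "2*n-1"] by simp
  ultimately show False
    using assms by simp
qed

lemma alt231_ending_beyond:
  assumes "1 \<le> n" and "2*n < v"
  shows "alt231_ending n v = {}"
proof (intro equals0I)
  fix p assume "p \<in> alt231_ending n v"
  then have "p permutes {1..2*n}" and "p (2*n) = v"
    by (simp_all add: alt231_ending_def alt231_def)
  then show False
    using permutes_in_image[of p "{1..2*n}" "2*n"] assms by simp
qed

lemma alt231_ending_1_2: "alt231_ending 1 2 = {id}"
proof
  show "{id} \<subseteq> alt231_ending 1 2"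
    by (auto simp: alt231_ending_def alt231_def alternating_def avoids231_def permutes_id
        numeral_2_eq_2 less_Suc_eq)
  show "alt231_ending 1 2 \<subseteq> {id}"
  proof
    fix p assume "p \<in> alt231_ending 1 2"
    then have perm: "p permutes {1..2}" and "p 2 = 2"
      by (simp_all add: alt231_ending_def alt231_def)
    then have "p 1 = 1"
      using permutes_in_image[OF perm, of 1] inj_eq[OF permutes_inj[OF perm], of 1 2] by auto
    with \<open>p 2 = 2\<close> have "p x = x" for x
      using permutes_not_in[OF perm, of x] by (cases "x = 1 \<or> x = 2") auto
    then show "p \<in> {id}"
      by (simp add: fun_eq_iff)
  qed
qed

definition choose_int :: "nat \<Rightarrow> int \<Rightarrow> int" where
  "choose_int m j = (if j < 0 then 0 else int (m choose nat j))"

lemma choose_int_Suc: "choose_int (Suc m) j = choose_int m j + choose_int m (j - 1)"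
proof (cases "j \<le> 0")
  case True
  then show ?thesis
    by (cases "j = 0") (auto simp: choose_int_def)
next
  case False
  then have "nat j = Suc (nat (j - 1))"
    by simp
  with False show ?thesis
    by (simp add: choose_int_def)
qed

definition ballot :: "nat \<Rightarrow> nat \<Rightarrow> int" where
  "ballot n v = choose_int (v - 2) (int v - int n - 1) - choose_int (v - 2) (int v - int n - 2)"

lemma ballot_Suc_Suc:
  assumes "1 \<le> a"
  shows "ballot (Suc n) (Suc a) = ballot (Suc n) a + ballot n a"
proof (cases "a = 1")
  case True
  then show ?thesis
    by (simp add: ballot_def choose_int_def)
next
  case False
  with assms obtain b where "a = Suc (Suc b)"
    by (metis One_nat_def Suc_le_D le_antisym not_less_eq_eq)
  then have "ballot (Suc n) (Suc a)
      = choose_int (Suc b) (1 + (int b - int n)) - choose_int (Suc b) (int b - int n)"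
    "ballot (Suc n) a = choose_int b (int b - int n) - choose_int b (int b - int n - 1)"
    "ballot n a = choose_int b (1 + (int b - int n)) - choose_int b (int b - int n)"
    by (simp_all add: ballot_def)
  then show ?thesis
    unfolding choose_int_Suc by simp
qed

lemma ballot_beyond:
  assumes "1 \<le> n"
  shows "ballot n (2*n+1) = 0"
proof -
  have "(2*n - 1) choose (n - 1) = (2*n - 1) choose n"
    using binomial_symmetric[of "n - 1" "2*n - 1"] assms by (simp add: Suc_diff_le)
  moreover have "ballot n (2*n+1) = choose_int (2*n - 1) (int n) - choose_int (2*n - 1) (int (n - 1))"
    using assms by (simp add: ballot_def of_nat_diff)
  ultimately show ?thesis
    by (simp add: choose_int_def)
qed

lemma card_alt231_ending:
  assumes "1 \<le> n"
  shows "1 \<le> v \<Longrightarrow> v \<le> 2*n \<Longrightarrow> int (card (alt231_ending n v)) = ballot n v"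
  using assms
proof (induction n arbitrary: v rule: nat_induct_at_least)
  case base
  then have "v = 1 \<or> v = 2"
    by auto
  then show ?case
    using alt231_ending_1[of 1] alt231_ending_1_2 by (auto simp: ballot_def choose_int_def)
next
  case (Suc n)
  note outer_IH = Suc.IH and n_pos = Suc.hyps
  from \<open>1 \<le> v\<close> \<open>v \<le> 2 * Suc n\<close> show ?case
  proof (induction v)
    case (Suc a)
    show ?case
    proof (cases "a = 0")
      case True
      then show ?thesis
        using alt231_ending_1[of "Suc n"] by (simp add: ballot_def choose_int_def)
    next
      case False
      have "int (card (alt231_ending n a)) = ballot n a"
      proof (cases "a \<le> 2*n")
        case True
        with False show ?thesis
          using outer_IH by simp
      next
        case False
        then have "a = 2*n+1"
          using \<open>Suc a \<le> 2 * Suc n\<close> by simp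
        then show ?thesis
          using alt231_ending_beyond[of n a] ballot_beyond[of n] n_pos by simp
      qed
      with False Suc show ?thesis
        using card_alt231_ending_Suc[OF n_pos, of a] by (simp add: ballot_Suc_Suc)
    qed
  qed simp
qed

lemma ballot_closed_form:
  assumes "1 \<le> n" and "k \<le> n"
  shows "real_of_int (ballot n (n+k+1)) = real (n - k) / real n * real ((n - 1 + k) choose k)"
proof (cases k)
  case 0
  with assms show ?thesis
    by (simp add: ballot_def choose_int_def)
next
  case (Suc j)
  obtain m where n: "n = Suc m"
    using assms(1) by (cases n) auto
  let ?c = "real ((n - 1 + k) choose k)"
  have "int (n+k+1) - int n - 1 = int k" "int (n+k+1) - int n - 2 = int j" "n+k+1-2 = n-1+k"
    using Suc n by simp_all
  then have "ballot n (n+k+1) = choose_int (n - 1 + k) (int k) - choose_int (n - 1 + k) (int j)"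
    unfolding ballot_def by (simp only:)
  then have "ballot n (n+k+1) = int ((n - 1 + k) choose k) - int ((n - 1 + k) choose j)"
    by (simp add: choose_int_def)
  moreover have "real k * ?c = real n * real ((n - 1 + k) choose j)"
    using Suc_times_binomial_add[of j m] unfolding n Suc of_nat_mult[symmetric]
    by (simp add: add.commute)
  ultimately have "real_of_int (ballot n (n+k+1)) = ?c - real k * ?c / real n"
    using assms(1) by simp
  also have "\<dots> = real (n - k) / real n * ?c"
    using assms by (simp add: of_nat_diff field_simps)
  finally show ?thesis .
qed

theorem proposition5p8:
  fixes n k :: nat
  assumes "1 \<le> n" and "k \<le> n - 1"
  shows "real (a_nk n k) = (real (n - k) / real n) * real ((n - 1 + k) choose k)"
proof -
  have "a_nk n k = card (alt231_ending n (n+k+1))"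
    by (simp add: a_nk_def alt231_ending_def)
  moreover have "int (card (alt231_ending n (n+k+1))) = ballot n (n+k+1)"
    using card_alt231_ending assms by simp
  ultimately have "real (a_nk n k) = real_of_int (ballot n (n+k+1))"
    by (metis of_int_of_nat_eq)
  with ballot_closed_form assms show ?thesis
    by simp
qed

end
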